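(* Let $d\ge1$ and let $\tau$ be a type of degree $d$. Then (1) $a^{-1}(\tau,(d^1))=0$ if $\tau$ is mixed; (2) if $\tau=(b_1^m\cdots b_r^m)$ is $m$-pure with $r$ parts, then $$a^{-1}(\tau,(d^1))=\frac{\mu(m)}{m}\cdot\frac{(-1)^{r-1}}{r}\cdot\frac{r!}{\tau[(1,m)]!\,\tau[(2,m)]!\cdots\tau[(d/m,m)]!}.$$
   Context: A type of degree $d$ is a finite multiset $\tau$ of pairs $(b,m)$ of positive integers with $\sum bm=d$; the pair $(b,m)$ is written $b^m$, $\tau[(b,m)]$ denotes the number of occurrences of $(b,m)$ in $\tau$, and the number of pairs counted with multiplicity is the length of $\tau$. $\tau$ is $m$-pure if every pair in it has second entry $m$, and mixed if it is not $m$-pure for any $m$. For types $\tau=\{(b_1,m_1),\dots,(b_r,m_r)\}$ and $\lambda=\{(c_1,n_1),\dots,(c_s,n_s)\}$ listed in some order, an arrangement of $\tau$ into $\lambda$ is an $r\times s$ matrix $A$ with non-negative integer entries such that $A\vec n=\vec m$ and $A^T\vec b=\vec c$; $a(\tau,\lambda)$ is the number of arrangements (independent of the chosen orderings). The square matrix $(a(\tau,\lambda))_{\tau,\lambda}$ indexed by types of degree $d$ is invertible over $\mathbb Q$, and $a^{-1}(\tau,\lambda)$ denotes the entries of its inverse. $(d^1)$ is the type $\{(d,1)\}$, and $\mu$ is the classical Möbius function. *)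

theory Defs
  imports Complex_Main "HOL-Library.Multiset" "HOL-Library.Product_Lexorder"
    "HOL-Computational_Algebra.Primes" "HOL-Computational_Algebra.Squarefree"
begin

type_synonym ptype = "(nat \<times> nat) multiset"

definition is_type :: "nat \<Rightarrow> ptype \<Rightarrow> bool" where
  "is_type d \<tau> \<longleftrightarrow> (\<forall>p \<in># \<tau>. 0 < fst p \<and> 0 < snd p) \<and>
                    (\<Sum>p \<in># \<tau>. fst p * snd p) = d"

definition types_of_degree :: "nat \<Rightarrow> ptype set" where
  "types_of_degree d = {\<tau>. is_type d \<tau>}"

definition is_pure :: "nat \<Rightarrow> ptype \<Rightarrow> bool" where
  "is_pure m \<tau> \<longleftrightarrow> (\<forall>p \<in># \<tau>. snd p = m)"

definition is_mixed :: "ptype \<Rightarrow> bool" where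
  "is_mixed \<tau> \<longleftrightarrow> (\<forall>m. \<not> is_pure m \<tau>)"

text \<open>Arrangements of \<tau> into \<sigma>, w.r.t. a fixed listing of both types
  (here: the sorted listing). Matrices are functions nat => nat => nat vanishing
  outside the index range r x s.\<close>
definition arrangements :: "ptype \<Rightarrow> ptype \<Rightarrow> (nat \<Rightarrow> nat \<Rightarrow> nat) set" where
  "arrangements \<tau> \<sigma> =
     (let ts = sorted_list_of_multiset \<tau>; ls = sorted_list_of_multiset \<sigma>;
          r = length ts; s = length ls in
      {A. (\<forall>i j. (i \<ge> r \<or> j \<ge> s) \<longrightarrow> A i j = 0) \<and>
          (\<forall>i<r. (\<Sum>j<s. A i j * snd (ls ! j)) = snd (ts ! i)) \<and>
          (\<forall>j<s. (\<Sum>i<r. A i j * fst (ts ! i)) = fst (ls ! j))})"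

definition arr_count :: "ptype \<Rightarrow> ptype \<Rightarrow> nat" where
  "arr_count \<tau> \<sigma> = card (arrangements \<tau> \<sigma>)"

text \<open>Entries of the inverse of the matrix (a(\<tau>,\<sigma>)) indexed by the types of degree d,
  over the rationals (the matrix is invertible, so this is well defined).\<close>
definition arr_inv :: "nat \<Rightarrow> ptype \<Rightarrow> ptype \<Rightarrow> rat" where
  "arr_inv d = (THE g.
      (\<forall>\<tau> \<in> types_of_degree d. \<forall>\<sigma> \<in> types_of_degree d.
         (\<Sum>\<nu> \<in> types_of_degree d. of_nat (arr_count \<tau> \<nu>) * g \<nu> \<sigma>)
           = (if \<tau> = \<sigma> then 1 else 0)) \<and>
      (\<forall>\<tau> \<sigma>. (\<tau> \<notin> types_of_degree d \<or> \<sigma> \<notin> types_of_degree d) \<longrightarrow> g \<tau> \<sigma> = 0))"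

definition mobius_mu :: "nat \<Rightarrow> int" where
  "mobius_mu n = (if n = 0 then 0 else if squarefree n then (-1) ^ card (prime_factors n) else 0)"

end

theory Submission
  imports Defs "HOL-Combinatorics.Multiset_Permutations" "HOL-Combinatorics.List_Permutation"
begin

text \<open>The arrangement matrix is triangular with nonzero diagonal for the order of types by total
  multiplicity (the sum of the second entries) and then by decreasing length. Hence the column of
  its inverse at (d^1) is the unique solution y of sum_nu a(tau,nu) y(nu) = [tau = (d^1)], and it
  suffices to check the claimed formula against this system.

  Fix tau = (b_1^m_1 ... b_r^m_r). The multinomial factor counts the orderings of an n-pure type nu
  with s parts, so the weighted sum of a(tau,nu) over these nu counts the arrangements of tau into
  lists of s pairs (c, n). These are exactly the r x s matrices with row sums m_i / n and no zero
  column, i.e. the ordered decompositions of the vector k = (m_i / n)_i into s nonzero vectors, and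
  there are none unless n divides every m_i. Splitting off the first part of a decomposition yields
  the inclusion-exclusion identity sum_s (-1)^(s-1)/s * #{decompositions into s parts} = [r = 1] / k_1,
  which leaves sum_{n | m} mu(n)/m = [m = 1] for tau = (b^m).\<close>

section \<open>Ordered decompositions of vectors\<close>

definition lower_box :: "(nat \<Rightarrow> nat) \<Rightarrow> (nat \<Rightarrow> nat) set" where
  "lower_box u = {w. \<forall>i. w i \<le> u i}"

definition vanishes_from :: "nat \<Rightarrow> (nat \<Rightarrow> nat) \<Rightarrow> bool" where
  "vanishes_from r u \<longleftrightarrow> (\<forall>i\<ge>r. u i = 0)"

text \<open>The columns of a matrix in \<open>vec_comps r s u\<close> are an ordered decomposition of the vector
  \<open>u\<close> (with \<open>r\<close> entries) into \<open>s\<close> nonzero vectors.\<close>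
definition vec_comps :: "nat \<Rightarrow> nat \<Rightarrow> (nat \<Rightarrow> nat) \<Rightarrow> (nat \<Rightarrow> nat \<Rightarrow> nat) set" where
  "vec_comps r s u = {A. (\<forall>i j. (i \<ge> r \<or> j \<ge> s) \<longrightarrow> A i j = 0) \<and>
      (\<forall>i<r. (\<Sum>j<s. A i j) = u i) \<and> (\<forall>j<s. \<exists>i<r. A i j \<noteq> 0)}"

lemma finite_bounded_vectors:
  "finite {w :: nat \<Rightarrow> nat. \<forall>i. w i \<le> B \<and> (r \<le> i \<longrightarrow> w i = 0)}"
  by (rule finite_subset[OF _ finite_set_of_finite_funs[of "{..<r}" "{..B}" 0]]) auto

lemma finite_bounded_matrices:
  "finite {A :: nat \<Rightarrow> nat \<Rightarrow> nat. \<forall>i j. A i j \<le> B \<and> ((r \<le> i \<or> s \<le> j) \<longrightarrow> A i j = 0)}"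
proof (rule finite_subset)
  let ?V = "{w :: nat \<Rightarrow> nat. \<forall>j. w j \<le> B \<and> (s \<le> j \<longrightarrow> w j = 0)}"
  show "finite {A. \<forall>i. (i \<in> {..<r} \<longrightarrow> A i \<in> ?V) \<and> (i \<notin> {..<r} \<longrightarrow> A i = (\<lambda>_. 0))}"
    by (rule finite_set_of_finite_funs) (auto intro: finite_bounded_vectors)
qed (auto simp: fun_eq_iff)

lemma vanishes_from_lower_box: "vanishes_from r u \<Longrightarrow> w \<in> lower_box u \<Longrightarrow> vanishes_from r w"
  by (auto simp: lower_box_def vanishes_from_def) (metis le_zero_eq)

lemma finite_lower_box:
  assumes "vanishes_from r u"
  shows "finite (lower_box u)"
proof (rule finite_subset[OF _ finite_bounded_vectors[of "\<Sum>i<r. u i" r]], safe)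
  fix w i assume w: "w \<in> lower_box u"
  have "u i \<le> (\<Sum>i<r. u i)"
    using assms by (cases "i < r") (auto intro: member_le_sum simp: vanishes_from_def)
  then show "w i \<le> (\<Sum>i<r. u i)" using w by (auto simp: lower_box_def intro: le_trans)
  show "r \<le> i \<Longrightarrow> w i = 0" using vanishes_from_lower_box[OF assms w] by (simp add: vanishes_from_def)
qed

lemma lower_box_flip: "bij_betw (\<lambda>w i. u i - w i) (lower_box u) (lower_box u)"
  by (rule bij_betw_byWitness[where f'="\<lambda>w i. u i - w i"]) (auto simp: lower_box_def fun_eq_iff)

lemma zero_in_lower_box: "(\<lambda>_. 0) \<in> lower_box u"
  by (simp add: lower_box_def)

lemma sum_lower_box_diff_less:
  assumes u: "vanishes_from r u" and v: "v \<in> lower_box u" "v \<noteq> (\<lambda>_. 0)"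
  shows "(\<Sum>i<r. u i - v i) < (\<Sum>i<r. u i)"
proof (rule sum_strict_mono_ex1)
  obtain i where i: "v i \<noteq> 0" using v(2) by (auto simp: fun_eq_iff)
  then have "i < r" using vanishes_from_lower_box[OF u v(1)] by (meson not_le vanishes_from_def)
  moreover have "v i \<le> u i" using v(1) by (simp add: lower_box_def)
  ultimately show "\<exists>i\<in>{..<r}. u i - v i < u i" using i by (intro bexI[of _ i]) auto
qed auto

lemma finite_vec_comps: "finite (vec_comps r s u)"
proof (rule finite_subset[OF _ finite_bounded_matrices[of "\<Sum>i<r. u i" r s]], safe)
  fix A i j assume A: "A \<in> vec_comps r s u"
  show "A i j \<le> (\<Sum>i<r. u i)"
  proof (cases "i < r \<and> j < s")
    case True
    have "A i j \<le> (\<Sum>j<s. A i j)" using True by (intro member_le_sum) auto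
    also have "\<dots> = u i" using A True by (simp add: vec_comps_def)
    also have "\<dots> \<le> (\<Sum>i<r. u i)" using True by (intro member_le_sum) auto
    finally show ?thesis .
  qed (use A in \<open>auto simp: vec_comps_def\<close>)
qed (auto simp: vec_comps_def)

lemma card_vec_comps_0: "card (vec_comps r 0 u) = (if \<forall>i<r. u i = 0 then 1 else 0)"
proof -
  have "vec_comps r 0 u = (if \<forall>i<r. u i = 0 then {\<lambda>_ _. 0} else {})"
    by (auto simp: vec_comps_def fun_eq_iff)
  then show ?thesis by simp
qed

lemma vec_comps_too_many_parts:
  assumes "(\<Sum>i<r. u i) < s"
  shows "vec_comps r s u = {}"
proof (rule ccontr)
  assume "vec_comps r s u \<noteq> {}"
  then obtain A where A: "A \<in> vec_comps r s u" by blast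
  have "s = (\<Sum>j<s. 1)" by simp
  also have "\<dots> \<le> (\<Sum>j<s. \<Sum>i<r. A i j)"
  proof (rule sum_mono)
    fix j assume "j \<in> {..<s}"
    then obtain i where i: "i < r" "A i j \<noteq> 0" using A by (auto simp: vec_comps_def)
    then have "A i j \<le> (\<Sum>i<r. A i j)" by (intro member_le_sum) auto
    then show "1 \<le> (\<Sum>i<r. A i j)" using i(2) by linarith
  qed
  also have "\<dots> = (\<Sum>i<r. \<Sum>j<s. A i j)" by (rule sum.swap)
  also have "\<dots> = (\<Sum>i<r. u i)" using A by (simp add: vec_comps_def)
  finally show False using assms by simp
qed

lemma vec_comps_Suc_bij:
  assumes u: "vanishes_from r u"
  shows "bij_betw (\<lambda>A. (\<lambda>i. A i 0, \<lambda>i j. A i (Suc j))) (vec_comps r (Suc s) u)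
           (SIGMA v:lower_box u - {\<lambda>_. 0}. vec_comps r s (\<lambda>i. u i - v i))"
proof (rule bij_betw_byWitness[where f' = "\<lambda>(v, B) i j. if j = 0 then v i else B i (j - 1)"])
  show "\<forall>A\<in>vec_comps r (Suc s) u. (\<lambda>(v, B) i j. if j = 0 then v i else B i (j - 1))
          (\<lambda>i. A i 0, \<lambda>i j. A i (Suc j)) = A"
    by (auto simp: fun_eq_iff gr0_conv_Suc)
  show "\<forall>p\<in>(SIGMA v:lower_box u - {\<lambda>_. 0}. vec_comps r s (\<lambda>i. u i - v i)).
          (\<lambda>A. (\<lambda>i. A i 0, \<lambda>i j. A i (Suc j))) ((\<lambda>(v, B) i j. if j = 0 then v i else B i (j - 1)) p) = p"
    by auto
  show "(\<lambda>A. (\<lambda>i. A i 0, \<lambda>i j. A i (Suc j))) ` vec_comps r (Suc s) u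
          \<subseteq> (SIGMA v:lower_box u - {\<lambda>_. 0}. vec_comps r s (\<lambda>i. u i - v i))"
  proof (rule image_subsetI)
    fix A assume A: "A \<in> vec_comps r (Suc s) u"
    have row: "A i 0 + (\<Sum>j<s. A i (Suc j)) = u i" if "i < r" for i
    proof -
      have "(\<Sum>j<Suc s. A i j) = u i" using A that by (simp add: vec_comps_def)
      then show ?thesis by (simp only: sum.lessThan_Suc_shift)
    qed
    have "A i 0 \<le> u i" for i
      using A row[of i] by (cases "i < r") (auto simp: vec_comps_def)
    then have "(\<lambda>i. A i 0) \<in> lower_box u" by (simp add: lower_box_def)
    moreover have "(\<lambda>i. A i 0) \<noteq> (\<lambda>_. 0)"
      using A by (force simp: vec_comps_def fun_eq_iff)
    moreover have "(\<lambda>i j. A i (Suc j)) \<in> vec_comps r s (\<lambda>i. u i - A i 0)"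
      unfolding vec_comps_def
    proof (intro CollectI conjI allI impI)
      fix i j assume "r \<le> i \<or> s \<le> j"
      then show "A i (Suc j) = 0" using A by (auto simp: vec_comps_def)
    next
      fix i assume "i < r"
      then show "(\<Sum>j<s. A i (Suc j)) = u i - A i 0" using row[of i] by linarith
    next
      fix j assume "j < s"
      then show "\<exists>i<r. A i (Suc j) \<noteq> 0" using A by (auto simp: vec_comps_def)
    qed
    ultimately show "(\<lambda>A. (\<lambda>i. A i 0, \<lambda>i j. A i (Suc j))) A
        \<in> (SIGMA v:lower_box u - {\<lambda>_. 0}. vec_comps r s (\<lambda>i. u i - v i))" by blast
  qed
  show "(\<lambda>(v, B) i j. if j = 0 then v i else B i (j - 1)) `
          (SIGMA v:lower_box u - {\<lambda>_. 0}. vec_comps r s (\<lambda>i. u i - v i)) \<subseteq> vec_comps r (Suc s) u"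
  proof (rule image_subsetI)
    fix p assume "p \<in> (SIGMA v:lower_box u - {\<lambda>_. 0}. vec_comps r s (\<lambda>i. u i - v i))"
    then obtain v B where p: "p = (v, B)" and v: "v \<in> lower_box u" "v \<noteq> (\<lambda>_. 0)"
      and B: "B \<in> vec_comps r s (\<lambda>i. u i - v i)" by blast
    have vr: "vanishes_from r v" using vanishes_from_lower_box[OF u v(1)] .
    let ?A = "\<lambda>i j. if j = 0 then v i else B i (j - 1)"
    have "?A \<in> vec_comps r (Suc s) u"
      unfolding vec_comps_def
    proof (intro CollectI conjI allI impI)
      fix i j assume "r \<le> i \<or> Suc s \<le> j"
      then show "?A i j = 0" using B vr by (auto simp: vec_comps_def vanishes_from_def)
    next
      fix i assume i: "i < r"
      have "(\<Sum>j<Suc s. ?A i j) = v i + (\<Sum>j<s. B i j)"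
        by (simp only: sum.lessThan_Suc_shift) simp
      also have "\<dots> = u i" using B i v(1) by (auto simp: vec_comps_def lower_box_def)
      finally show "(\<Sum>j<Suc s. ?A i j) = u i" .
    next
      fix j assume j: "j < Suc s"
      show "\<exists>i<r. ?A i j \<noteq> 0"
      proof (cases j)
        case 0
        obtain i where "v i \<noteq> 0" using v(2) by (auto simp: fun_eq_iff)
        moreover from this have "i < r" using vr by (meson not_le vanishes_from_def)
        ultimately show ?thesis using 0 by auto
      next
        case (Suc j')
        then show ?thesis using B j by (auto simp: vec_comps_def)
      qed
    qed
    then show "(\<lambda>(v, B) i j. if j = 0 then v i else B i (j - 1)) p \<in> vec_comps r (Suc s) u"
      by (simp add: p)
  qed
qed

lemma sum_vec_comps_Suc:
  fixes h :: "(nat \<Rightarrow> nat) \<Rightarrow> 'a::comm_semiring_1"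
  assumes u: "vanishes_from r u"
  shows "(\<Sum>A\<in>vec_comps r (Suc s) u. h (\<lambda>i. A i 0))
       = (\<Sum>v\<in>lower_box u - {\<lambda>_. 0}. h v * of_nat (card (vec_comps r s (\<lambda>i. u i - v i))))"
proof -
  have "(\<Sum>A\<in>vec_comps r (Suc s) u. h (\<lambda>i. A i 0))
      = (\<Sum>p\<in>(SIGMA v:lower_box u - {\<lambda>_. 0}. vec_comps r s (\<lambda>i. u i - v i)). h (fst p))"
    using sum.reindex_bij_betw[OF vec_comps_Suc_bij[OF u], of "\<lambda>p. h (fst p)"] by simp
  also have "\<dots> = (\<Sum>v\<in>lower_box u - {\<lambda>_. 0}. \<Sum>B\<in>vec_comps r s (\<lambda>i. u i - v i). h v)"
    by (subst sum.Sigma) (use finite_lower_box[OF u] finite_vec_comps in \<open>auto simp: split_def\<close>)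
  finally show ?thesis by (simp add: mult.commute)
qed

lemma card_vec_comps_Suc:
  assumes "vanishes_from r u"
  shows "card (vec_comps r (Suc s) u)
       = (\<Sum>v\<in>lower_box u - {\<lambda>_. 0}. card (vec_comps r s (\<lambda>i. u i - v i)))"
  using sum_vec_comps_Suc[OF assms, where h="\<lambda>_. 1::nat" and s=s] by simp

lemma vec_comps_transpose_cols:
  assumes j: "j < s" and A: "A \<in> vec_comps r s u"
  shows "(\<lambda>i x. A i (transpose 0 j x)) \<in> vec_comps r s u"
  unfolding vec_comps_def
proof (intro CollectI conjI allI impI)
  have lt: "transpose 0 j x < s \<longleftrightarrow> x < s" for x
    using j by (auto simp: transpose_def)
  fix i x assume "r \<le> i \<or> s \<le> x"
  then show "A i (transpose 0 j x) = 0" using A lt[of x] by (auto simp: vec_comps_def)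
next
  fix i assume i: "i < r"
  have "(\<Sum>x<s. A i (transpose 0 j x)) = (\<Sum>x<s. A i x)"
    using j by (intro sum.reindex_bij_betw) simp
  then show "(\<Sum>x<s. A i (transpose 0 j x)) = u i" using A i by (simp add: vec_comps_def)
next
  fix x assume "x < s"
  then have "transpose 0 j x < s" using j by (auto simp: transpose_def)
  then show "\<exists>i<r. A i (transpose 0 j x) \<noteq> 0" using A by (simp add: vec_comps_def)
qed

lemma sum_vec_comps_entry:
  assumes "i < r"
  shows "s * (\<Sum>A\<in>vec_comps r s u. A i 0) = u i * card (vec_comps r s u)"
proof -
  have col: "(\<Sum>A\<in>vec_comps r s u. A i j) = (\<Sum>A\<in>vec_comps r s u. A i 0)" if j: "j < s" for j
  proof -
    have "bij_betw (\<lambda>A i x. A i (transpose 0 j x)) (vec_comps r s u) (vec_comps r s u)"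
      by (rule bij_betw_byWitness[where f'="\<lambda>A i x. A i (transpose 0 j x)"])
        (simp_all add: image_subset_iff vec_comps_transpose_cols[OF j])
    from sum.reindex_bij_betw[OF this, of "\<lambda>A. A i 0"] show ?thesis by simp
  qed
  have "s * (\<Sum>A\<in>vec_comps r s u. A i 0) = (\<Sum>j<s. \<Sum>A\<in>vec_comps r s u. A i j)"
    using sum.cong[OF refl col, of "{..<s}"] by simp
  also have "\<dots> = (\<Sum>A\<in>vec_comps r s u. \<Sum>j<s. A i j)" by (rule sum.swap)
  also have "\<dots> = (\<Sum>A\<in>vec_comps r s u. u i)" using assms by (intro sum.cong) (auto simp: vec_comps_def)
  finally show ?thesis by simp
qed

definition alt_comps :: "nat \<Rightarrow> nat \<Rightarrow> (nat \<Rightarrow> nat) \<Rightarrow> int" where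
  "alt_comps r D u = (\<Sum>t\<le>D. (-1)^t * int (card (vec_comps r t u)))"

lemma alt_comps_lower_box_diff:
  assumes u: "vanishes_from r u" and D: "(\<Sum>i<r. u i) \<le> D" and v: "v \<in> lower_box u - {\<lambda>_. 0}"
  shows "alt_comps r D (\<lambda>i. u i - v i) = (\<Sum>t<D. (-1)^t * int (card (vec_comps r t (\<lambda>i. u i - v i))))"
proof -
  have "(\<Sum>i<r. u i - v i) < (\<Sum>i<r. u i)" using sum_lower_box_diff_less[OF u] v by blast
  then have "vec_comps r D (\<lambda>i. u i - v i) = {}"
    using D by (intro vec_comps_too_many_parts) linarith
  then show ?thesis by (simp add: alt_comps_def lessThan_Suc_atMost[symmetric])
qed

text \<open>Splitting off the first part of a decomposition makes the terms for \<open>t + 1\<close> parts cancel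
  against those for \<open>t\<close> parts of the complements; only the empty decomposition of \<open>0\<close> survives.\<close>
lemma sum_lower_box_alt_comps:
  assumes u: "vanishes_from r u" and D: "(\<Sum>i<r. u i) \<le> D"
  shows "(\<Sum>w\<in>lower_box u. alt_comps r D w) = (if \<forall>i<r. u i = 0 then 1 else 0)"
proof -
  let ?B = "lower_box u - {\<lambda>_. 0}"
  let ?R = "\<lambda>t. \<Sum>v\<in>?B. (-1)^t * int (card (vec_comps r t (\<lambda>i. u i - v i)))"
  have "(\<Sum>w\<in>lower_box u. alt_comps r D w) = (\<Sum>v\<in>lower_box u. alt_comps r D (\<lambda>i. u i - v i))"
    by (rule sum.reindex_bij_betw[OF lower_box_flip, symmetric])
  also have "\<dots> = alt_comps r D u + (\<Sum>v\<in>?B. alt_comps r D (\<lambda>i. u i - v i))"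
    using sum.remove[OF finite_lower_box[OF u] zero_in_lower_box,
        of "\<lambda>v. alt_comps r D (\<lambda>i. u i - v i)"] by simp
  also have "(\<Sum>v\<in>?B. alt_comps r D (\<lambda>i. u i - v i)) = (\<Sum>t<D. ?R t)"
    by (simp add: alt_comps_lower_box_diff[OF u D] sum.swap[of _ ?B])
  also have "alt_comps r D u = int (card (vec_comps r 0 u)) - (\<Sum>t<D. ?R t)"
    by (simp add: alt_comps_def sum.atMost_shift card_vec_comps_Suc[OF u] sum_distrib_left
        sum_negf[symmetric] del: sum.lessThan_Suc)
  finally show ?thesis by (simp add: card_vec_comps_0)
qed

lemma alternating_sum_first_entries:
  assumes r: "0 < r" and k: "vanishes_from r k" and pos: "\<forall>i<r. 1 \<le> k i" and D: "(\<Sum>i<r. k i) \<le> D"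
  shows "(\<Sum>t<D. (-1)^t * (\<Sum>A\<in>vec_comps r (Suc t) k. int (A 0 0))) = (if r = 1 then 1 else 0)"
proof -
  let ?B = "lower_box k - {\<lambda>_. 0}"
  let ?M = "alt_comps r D"
  have fB: "finite (lower_box k)" using finite_lower_box[OF k] .
  have "(\<Sum>t<D. (-1)^t * (\<Sum>A\<in>vec_comps r (Suc t) k. int (A 0 0)))
      = (\<Sum>t<D. \<Sum>v\<in>?B. int (v 0) * ((-1)^t * int (card (vec_comps r t (\<lambda>i. k i - v i)))))"
    by (simp add: sum_vec_comps_Suc[OF k, where h="\<lambda>v. int (v 0)"] sum_distrib_left algebra_simps)
  also have "\<dots> = (\<Sum>v\<in>?B. int (v 0) * ?M (\<lambda>i. k i - v i))"
    by (subst sum.swap) (simp add: alt_comps_lower_box_diff[OF k D] sum_distrib_left)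
  also have "\<dots> = (\<Sum>v\<in>lower_box k. int (v 0) * ?M (\<lambda>i. k i - v i))"
    using sum.remove[OF fB zero_in_lower_box, of "\<lambda>v. int (v 0) * ?M (\<lambda>i. k i - v i)"] by simp
  also have "\<dots> = (\<Sum>w\<in>lower_box k. int (k 0 - w 0) * ?M w)"
  proof -
    have "(\<Sum>w\<in>lower_box k. int (k 0 - w 0) * ?M w)
        = (\<Sum>v\<in>lower_box k. int (k 0 - (k 0 - v 0)) * ?M (\<lambda>i. k i - v i))"
      by (rule sum.reindex_bij_betw[OF lower_box_flip, symmetric])
    also have "\<dots> = (\<Sum>v\<in>lower_box k. int (v 0) * ?M (\<lambda>i. k i - v i))"
      by (rule sum.cong) (auto simp: lower_box_def)
    finally show ?thesis by simp
  qed
  also have "\<dots> = (\<Sum>w\<in>lower_box k. \<Sum>x\<in>{1..k 0}. if w 0 < x then ?M w else 0)"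
  proof (rule sum.cong[OF refl])
    fix w :: "nat \<Rightarrow> nat"
    have "{x\<in>{1..k 0}. w 0 < x} = {Suc (w 0)..k 0}" by auto
    then show "int (k 0 - w 0) * ?M w = (\<Sum>x\<in>{1..k 0}. if w 0 < x then ?M w else 0)"
      by (simp add: sum.inter_filter[symmetric])
  qed
  also have "\<dots> = (\<Sum>x\<in>{1..k 0}. \<Sum>w\<in>lower_box (k(0 := x - 1)). ?M w)"
  proof (subst sum.swap, rule sum.cong[OF refl])
    fix x assume x: "x \<in> {1..k 0}"
    have "lower_box (k(0 := x - 1)) = {w\<in>lower_box k. w 0 < x}"
      using x by (auto simp: lower_box_def)
    then show "(\<Sum>w\<in>lower_box k. if w 0 < x then ?M w else 0) = (\<Sum>w\<in>lower_box (k(0 := x - 1)). ?M w)"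
      by (simp add: sum.inter_filter[OF fB])
  qed
  also have "\<dots> = (\<Sum>x\<in>{1..k 0}. if \<forall>i<r. (k(0 := x - 1)) i = 0 then 1 else 0)"
  proof (rule sum.cong[OF refl])
    fix x assume x: "x \<in> {1..k 0}"
    have kx: "vanishes_from r (k(0 := x - 1))" using k r by (auto simp: vanishes_from_def)
    have "(\<Sum>i<r. (k(0 := x - 1)) i) \<le> (\<Sum>i<r. k i)"
      using x by (intro sum_mono) auto
    with kx D show "(\<Sum>w\<in>lower_box (k(0 := x - 1)). ?M w) = (if \<forall>i<r. (k(0 := x - 1)) i = 0 then 1 else 0)"
      by (intro sum_lower_box_alt_comps) auto
  qed
  also have "\<dots> = (if r = 1 then 1 else 0)"
  proof (cases "r = 1")
    case True
    then have "(\<Sum>x\<in>{1..k 0}. if \<forall>i<r. (k(0 := x - 1)) i = 0 then 1 else 0)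
        = (\<Sum>x\<in>{1..k 0}. if x = 1 then 1 else (0::int))"
      by (intro sum.cong) auto
    then show ?thesis using True pos r by simp
  next
    case False
    then have "1 < r" using r by linarith
    moreover from this have "k 1 \<noteq> 0" using pos by fastforce
    ultimately show ?thesis using False by (intro trans[OF sum.neutral]) auto
  qed
  finally show ?thesis .
qed

lemma alternating_sum_vec_comps:
  assumes r: "0 < r" and k: "vanishes_from r k" and pos: "\<forall>i<r. 1 \<le> k i" and D: "(\<Sum>i<r. k i) \<le> D"
  shows "(\<Sum>s=1..D. (-1)^(s-1) / of_nat s * of_nat (card (vec_comps r s k)) :: 'a::field_char_0)
       = (if r = 1 then 1 / of_nat (k 0) else 0)"
proof -
  have k0: "k 0 \<noteq> 0" using pos r by auto
  have weight: "(of_nat (card (vec_comps r (Suc t) k)) :: 'a) / of_nat (Suc t)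
      = of_int (\<Sum>A\<in>vec_comps r (Suc t) k. int (A 0 0)) / of_nat (k 0)" for t
  proof -
    have "(of_nat (Suc t) :: 'a) * of_nat (\<Sum>A\<in>vec_comps r (Suc t) k. A 0 0)
        = of_nat (k 0) * of_nat (card (vec_comps r (Suc t) k))"
      using sum_vec_comps_entry[OF r, of "Suc t" k] by (metis of_nat_mult)
    then show ?thesis using k0 by (simp add: frac_eq_eq algebra_simps del: of_nat_Suc)
  qed
  have "(\<Sum>s=1..D. (-1)^(s-1) / of_nat s * of_nat (card (vec_comps r s k)) :: 'a)
      = (\<Sum>t<D. (-1)^t * (of_nat (card (vec_comps r (Suc t) k)) / of_nat (Suc t)))"
    by (subst image_Suc_lessThan[symmetric], subst sum.reindex) auto
  also have "\<dots> = (\<Sum>t<D. (-1)^t * (of_int (\<Sum>A\<in>vec_comps r (Suc t) k. int (A 0 0)) / of_nat (k 0)))"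
    by (rule sum.cong[OF refl]) (simp only: weight)
  also have "\<dots> = of_int (\<Sum>t<D. (-1)^t * (\<Sum>A\<in>vec_comps r (Suc t) k. int (A 0 0))) / of_nat (k 0)"
    by (simp add: sum_divide_distrib[symmetric])
  finally show ?thesis by (simp add: alternating_sum_first_entries[OF r k pos D])
qed

section \<open>The Moebius function\<close>

lemma mobius_mu_prime_mult:
  assumes p: "prime p" and n: "n > 0" and nd: "\<not> p dvd n"
  shows "mobius_mu (p * n) = - mobius_mu n"
proof -
  have cop: "coprime p n" using p nd by (simp add: prime_imp_coprime)
  have sq: "squarefree (p * n) \<longleftrightarrow> squarefree n"
  proof
    assume "squarefree (p * n)" then show "squarefree n" by (rule squarefree_mono[rotated]) simp
  next
    assume "squarefree n" then show "squarefree (p * n)"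
      using squarefree_mult_coprime[OF cop] squarefree_prime[OF p] by blast
  qed
  have pf: "prime_factors (p * n) = insert p (prime_factors n)"
    using prime_factors_product[of p n] p n prime_prime_factors[OF p] by (auto simp: prime_gt_0_nat)
  have pn: "p \<notin> prime_factors n" using nd by auto
  have "p * n \<noteq> 0" using p n by (auto simp: prime_gt_0_nat)
  then show ?thesis using n sq pn by (simp add: mobius_mu_def pf)
qed

lemma mobius_mu_prime_mult_dvd:
  assumes p: "prime p" and nd: "p dvd n"
  shows "mobius_mu (p * n) = 0"
proof -
  have "\<not> squarefree (p * n)"
  proof (rule not_squarefreeI[of p])
    show "p ^ 2 dvd p * n" using nd by (simp add: power2_eq_square)
    show "\<not> p dvd 1" using prime_gt_1_nat[OF p] by simp
  qed
  then show ?thesis by (simp add: mobius_mu_def)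
qed

text \<open>Pairing each divisor \<open>n\<close> with \<open>p * n\<close> for a prime factor \<open>p\<close> of \<open>m\<close> makes the terms cancel.\<close>
lemma sum_mobius_mu_divisors:
  assumes m: "m > 0"
  shows "(\<Sum>n | n dvd m. mobius_mu n) = (if m = 1 then 1 else 0)"
proof (cases "m = 1")
  case True
  then show ?thesis by (simp add: mobius_mu_def)
next
  case False
  then obtain p where p: "prime p" "p dvd m" using m prime_factor_nat by blast
  then obtain q where q: "m = p * q" by blast
  have q0: "q > 0" using q m by auto
  let ?S1 = "{n. n dvd m \<and> \<not> p dvd n}"
  let ?S2 = "{n. n dvd m \<and> p dvd n}"
  have fin: "finite {n. n dvd m}" using m by simp
  have split: "{n. n dvd m} = ?S1 \<union> ?S2" by auto
  have "(\<Sum>n | n dvd m. mobius_mu n) = (\<Sum>n\<in>?S1. mobius_mu n) + (\<Sum>n\<in>?S2. mobius_mu n)"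
    by (subst split, rule sum.union_disjoint) (use fin in auto)
  also have "?S2 = (\<lambda>n. p * n) ` {n. n dvd q}"
  proof safe
    fix n assume "n dvd m" "p dvd n"
    then obtain k where k: "n = p * k" by blast
    then have "k dvd q" using \<open>n dvd m\<close> q p(1) by (auto simp: prime_gt_0_nat)
    then show "n \<in> (\<lambda>n. p * n) ` {n. n dvd q}" using k by blast
  next
    fix k assume "k dvd q" then show "p * k dvd m" using q by simp
  qed simp
  also have "(\<Sum>n\<in>(\<lambda>n. p * n) ` {n. n dvd q}. mobius_mu n) = (\<Sum>k | k dvd q. mobius_mu (p * k))"
    by (subst sum.reindex) (use p(1) in \<open>auto simp: inj_on_def prime_gt_0_nat\<close>)
  also have "\<dots> = (\<Sum>k\<in>{k. k dvd q \<and> \<not> p dvd k}. mobius_mu (p * k))"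
    using q0 by (intro sum.mono_neutral_right) (auto simp: mobius_mu_prime_mult_dvd[OF p(1)])
  also have "{k. k dvd q \<and> \<not> p dvd k} = ?S1"
  proof safe
    fix k assume "k dvd q" then show "k dvd m" using q by simp
  next
    fix k assume k: "k dvd m" "\<not> p dvd k"
    have "coprime k p" using prime_imp_coprime[OF p(1) k(2)] by (simp add: ac_simps)
    then show "k dvd q" using k(1) q by (metis coprime_dvd_mult_right_iff)
  qed
  also have "(\<Sum>k\<in>?S1. mobius_mu (p * k)) = (\<Sum>k\<in>?S1. - mobius_mu k)"
    using m by (intro sum.cong[OF refl] mobius_mu_prime_mult[OF p(1)]) (auto intro: Nat.gr0I)
  finally show ?thesis using False by (simp add: sum_negf)
qed

section \<open>Arrangements into lists\<close>

lemma sum_mset_mset_eq_sum_nth: "(\<Sum>p\<in>#mset xs. f p) = (\<Sum>i<length xs. f (xs ! i))"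
  by (simp add: sum_mset_sum_list sum_list_sum_nth atLeast0LessThan flip: mset_map)

definition list_arrangements :: "(nat \<times> nat) list \<Rightarrow> (nat \<times> nat) list \<Rightarrow> (nat \<Rightarrow> nat \<Rightarrow> nat) set" where
  "list_arrangements ts ls = {A. (\<forall>i j. (i \<ge> length ts \<or> j \<ge> length ls) \<longrightarrow> A i j = 0) \<and>
     (\<forall>i<length ts. (\<Sum>j<length ls. A i j * snd (ls ! j)) = snd (ts ! i)) \<and>
     (\<forall>j<length ls. (\<Sum>i<length ts. A i j * fst (ts ! i)) = fst (ls ! j))}"

lemma arrangements_eq_list_arrangements:
  "arrangements \<tau> \<sigma> = list_arrangements (sorted_list_of_multiset \<tau>) (sorted_list_of_multiset \<sigma>)"
  by (simp add: arrangements_def list_arrangements_def Let_def)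

lemma list_arrangements_reindex:
  assumes f: "bij_betw f {..<s} {..<s}" and l: "length ls = s" "length ls' = s"
    and e: "\<forall>j<s. ls ! j = ls' ! (f j)" and B: "B \<in> list_arrangements ts ls'"
  shows "(\<lambda>i j. if j < s then B i (f j) else 0) \<in> list_arrangements ts ls"
  unfolding list_arrangements_def
proof (intro CollectI conjI allI impI)
  fix i j assume "length ts \<le> i \<or> length ls \<le> j"
  then show "(if j < s then B i (f j) else 0) = 0" using B l by (auto simp: list_arrangements_def)
next
  fix i assume i: "i < length ts"
  have "(\<Sum>j<length ls. (if j < s then B i (f j) else 0) * snd (ls ! j))
      = (\<Sum>j<s. B i (f j) * snd (ls' ! (f j)))" using l e by (intro sum.cong) auto
  also have "\<dots> = (\<Sum>j<s. B i j * snd (ls' ! j))"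
    by (rule sum.reindex_bij_betw[OF f, of "\<lambda>j. B i j * snd (ls' ! j)"])
  also have "\<dots> = snd (ts ! i)" using B i l by (auto simp: list_arrangements_def)
  finally show "(\<Sum>j<length ls. (if j < s then B i (f j) else 0) * snd (ls ! j)) = snd (ts ! i)" .
next
  fix j assume j: "j < length ls"
  then have "f j < s" using f l by (auto dest: bij_betwE)
  then show "(\<Sum>i<length ts. (if j < s then B i (f j) else 0) * fst (ts ! i)) = fst (ls ! j)"
    using B e j l by (auto simp: list_arrangements_def)
qed

lemma card_list_arrangements_mset_eq:
  assumes "mset ls = mset ls'"
  shows "card (list_arrangements ts ls) = card (list_arrangements ts ls')"
proof -
  define s where "s = length ls"
  have l: "length ls = s" "length ls' = s" using assms s_def by (auto dest: mset_eq_length)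
  obtain f where f: "bij_betw f {..<s} {..<s}" and e: "\<forall>j<s. ls ! j = ls' ! (f j)"
    using permutation_Ex_bij[OF assms] l by auto
  define g where "g = the_inv_into {..<s} f"
  have g: "bij_betw g {..<s} {..<s}" unfolding g_def by (rule bij_betw_the_inv_into[OF f])
  have fg: "f (g j) = j" and gs: "g j < s" if "j < s" for j
    using that f g by (auto simp: g_def f_the_inv_into_f_bij_betw dest: bij_betwE)
  have gf: "g (f j) = j" and fs: "f j < s" if "j < s" for j
    using that f by (auto simp: g_def bij_betw_def the_inv_into_f_f dest: bij_betwE)
  have e': "\<forall>j<s. ls' ! j = ls ! (g j)" using e fg gs by metis
  show ?thesis
  proof (rule bij_betw_same_card[of "\<lambda>A i j. if j < s then A i (g j) else 0"],
         rule bij_betw_byWitness[where f'="\<lambda>B i j. if j < s then B i (f j) else 0"])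
    show "\<forall>A\<in>list_arrangements ts ls.
        (\<lambda>i j. if j < s then (if f j < s then A i (g (f j)) else 0) else 0) = A"
      using gf fs l by (auto simp: list_arrangements_def fun_eq_iff)
    show "\<forall>B\<in>list_arrangements ts ls'.
        (\<lambda>i j. if j < s then (if g j < s then B i (f (g j)) else 0) else 0) = B"
      using fg gs l by (auto simp: list_arrangements_def fun_eq_iff)
    show "(\<lambda>A i j. if j < s then A i (g j) else 0) ` list_arrangements ts ls \<subseteq> list_arrangements ts ls'"
      using list_arrangements_reindex[OF g l(2) l(1) e'] by auto
    show "(\<lambda>B i j. if j < s then B i (f j) else 0) ` list_arrangements ts ls' \<subseteq> list_arrangements ts ls"
      using list_arrangements_reindex[OF f l e] by auto
  qed
qed

lemma finite_list_arrangements: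
  assumes pos: "\<forall>i<length ts. 0 < fst (ts ! i)"
  shows "finite (list_arrangements ts ls)"
proof (rule finite_subset[OF _ finite_bounded_matrices[of "\<Sum>j<length ls. fst (ls ! j)"
      "length ts" "length ls"]], safe)
  fix A i j assume A: "A \<in> list_arrangements ts ls"
  show "A i j \<le> (\<Sum>j<length ls. fst (ls ! j))"
  proof (cases "i < length ts \<and> j < length ls")
    case True
    have "A i j \<le> A i j * fst (ts ! i)" using pos True by (simp add: Suc_le_eq)
    also have "\<dots> \<le> (\<Sum>i<length ts. A i j * fst (ts ! i))" using True by (intro member_le_sum) auto
    also have "\<dots> = fst (ls ! j)" using A True by (simp add: list_arrangements_def)
    also have "\<dots> \<le> (\<Sum>j<length ls. fst (ls ! j))" using True by (intro member_le_sum) auto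
    finally show ?thesis .
  qed (use A in \<open>auto simp: list_arrangements_def\<close>)
qed (auto simp: list_arrangements_def)

section \<open>Types and pure types\<close>

lemma is_type_mset_iff:
  "is_type d (mset xs) \<longleftrightarrow> (\<forall>i<length xs. 0 < fst (xs ! i) \<and> 0 < snd (xs ! i)) \<and>
     (\<Sum>i<length xs. fst (xs ! i) * snd (xs ! i)) = d"
  by (simp add: is_type_def sum_mset_mset_eq_sum_nth all_set_conv_all_nth)

lemma is_type_elem_le:
  assumes "is_type d \<nu>" and "x \<in># \<nu>"
  shows "fst x * snd x \<le> d"
proof -
  have "(\<Sum>p\<in>#\<nu>. fst p * snd p) = fst x * snd x + (\<Sum>p\<in>#\<nu> - {#x#}. fst p * snd p)"
    using assms(2) by (metis (no_types, lifting) insert_DiffM sum_mset.insert)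
  then show ?thesis using assms(1) by (simp add: is_type_def)
qed

lemma is_type_size_le:
  assumes "is_type d \<nu>"
  shows "size \<nu> \<le> d"
proof -
  have "size \<nu> = (\<Sum>p\<in>#\<nu>. 1::nat)" by (rule size_eq_sum_mset)
  also have "\<dots> \<le> (\<Sum>p\<in>#\<nu>. fst p * snd p)"
    by (rule sum_mset_mono) (use assms in \<open>auto simp: is_type_def Suc_le_eq\<close>)
  also have "\<dots> = d" using assms by (simp add: is_type_def)
  finally show ?thesis .
qed

lemma finite_types_of_degree: "finite (types_of_degree d)"
proof (rule finite_subset[OF _ finite_imageI[OF finite_lists_length_le[of "{0..d} \<times> {0..d}" d]]])
  show "types_of_degree d \<subseteq> mset ` {xs. set xs \<subseteq> {0..d} \<times> {0..d} \<and> length xs \<le> d}"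
  proof
    fix \<nu> assume "\<nu> \<in> types_of_degree d"
    then have t: "is_type d \<nu>" by (simp add: types_of_degree_def)
    have "fst x \<le> d \<and> snd x \<le> d" if "x \<in># \<nu>" for x
    proof -
      have "0 < fst x" "0 < snd x" using t that by (auto simp: is_type_def)
      then show ?thesis using is_type_elem_le[OF t that] by (metis le_trans mult_le_mono1
          mult_le_mono2 mult_1 mult_1_right Suc_leI One_nat_def)
    qed
    then have "set (sorted_list_of_multiset \<nu>) \<subseteq> {0..d} \<times> {0..d}" by force
    moreover have "length (sorted_list_of_multiset \<nu>) \<le> d"
      using is_type_size_le[OF t] by (metis mset_sorted_list_of_multiset size_mset)
    ultimately show "\<nu> \<in> mset ` {xs. set xs \<subseteq> {0..d} \<times> {0..d} \<and> length xs \<le> d}"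
      by (intro image_eqI[where x="sorted_list_of_multiset \<nu>"]) auto
  qed
qed simp

definition pure_types :: "nat \<Rightarrow> nat \<Rightarrow> nat \<Rightarrow> ptype set" where
  "pure_types d n s = {\<nu>. is_type d \<nu> \<and> is_pure n \<nu> \<and> size \<nu> = s}"

lemma finite_pure_types: "finite (pure_types d n s)"
  by (rule finite_subset[OF _ finite_types_of_degree[of d]])
    (auto simp: pure_types_def types_of_degree_def)

lemma pure_lists_eq_UN_permutations:
  "{xs. mset xs \<in> pure_types d n s} = (\<Union>\<nu>\<in>pure_types d n s. permutations_of_multiset \<nu>)"
  by (auto simp: permutations_of_multiset_def)

lemma finite_pure_lists: "finite {xs. mset xs \<in> pure_types d n s}"
  by (simp add: pure_lists_eq_UN_permutations finite_pure_types)

lemma mset_in_pure_types_iff: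
  assumes "0 < n"
  shows "mset xs \<in> pure_types d n s \<longleftrightarrow> length xs = s \<and>
    (\<forall>j<length xs. 0 < fst (xs ! j) \<and> snd (xs ! j) = n) \<and>
    (\<Sum>j<length xs. fst (xs ! j) * snd (xs ! j)) = d"
  using assms by (auto simp: pure_types_def is_type_mset_iff is_pure_def all_set_conv_all_nth)

lemma card_permutations_of_pure_type:
  assumes "\<nu> \<in> pure_types d n s" and n: "0 < n"
  shows "(of_nat (fact s) / of_nat (\<Prod>b\<in>{1..d div n}. fact (count \<nu> (b, n))) :: 'a::field_char_0)
         = of_nat (card (permutations_of_multiset \<nu>))"
proof -
  have t: "is_type d \<nu>" and p: "is_pure n \<nu>" and s: "size \<nu> = s"
    using assms(1) by (auto simp: pure_types_def)
  have "set_mset \<nu> \<subseteq> (\<lambda>b. (b, n)) ` {1..d div n}"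
  proof
    fix x assume x: "x \<in># \<nu>"
    then have "snd x = n" "0 < fst x" using p t by (auto simp: is_pure_def is_type_def)
    moreover have "fst x * snd x \<le> d" by (rule is_type_elem_le[OF t x])
    ultimately show "x \<in> (\<lambda>b. (b, n)) ` {1..d div n}"
      using n by (intro image_eqI[of _ _ "fst x"]) (auto simp: less_eq_div_iff_mult_less_eq)
  qed
  then have "(\<Prod>x\<in>(\<lambda>b. (b, n)) ` {1..d div n}. fact (count \<nu> x)) = (\<Prod>x\<in>set_mset \<nu>. fact (count \<nu> x) :: nat)"
    by (intro prod.mono_neutral_right) (auto simp: not_in_iff)
  then have "(\<Prod>b\<in>{1..d div n}. fact (count \<nu> (b, n))) = (\<Prod>x\<in>set_mset \<nu>. fact (count \<nu> x) :: nat)"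
    by (subst (asm) prod.reindex) (auto simp: inj_on_def)
  moreover have "card (permutations_of_multiset \<nu>) * (\<Prod>x\<in>set_mset \<nu>. fact (count \<nu> x)) = fact s"
    using card_permutations_of_multiset_aux[of \<nu>] s by simp
  moreover have "(\<Prod>x\<in>set_mset \<nu>. fact (count \<nu> x) :: nat) \<noteq> 0" by simp
  ultimately show ?thesis
    by (metis nonzero_mult_div_cancel_right of_nat_eq_0_iff of_nat_mult)
qed

section \<open>Arrangements into pure types\<close>

definition mult_quotients :: "(nat \<times> nat) list \<Rightarrow> nat \<Rightarrow> nat \<Rightarrow> nat" where
  "mult_quotients ts n i = (if i < length ts then snd (ts ! i) div n else 0)"

lemma list_arrangements_pure_eq:
  assumes n: "0 < n" and dvd: "\<forall>i<length ts. n dvd snd (ts ! i)" and l: "mset l \<in> pure_types d n s"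
  shows "list_arrangements ts l = {A \<in> vec_comps (length ts) s (mult_quotients ts n).
           \<forall>j<s. (\<Sum>i<length ts. A i j * fst (ts ! i)) = fst (l ! j)}"
proof -
  have ls: "length l = s" and lp: "\<And>j. j < s \<Longrightarrow> 0 < fst (l ! j) \<and> snd (l ! j) = n"
    using l unfolding mset_in_pure_types_iff[OF n] by auto
  have row: "(\<Sum>j<s. A i j * snd (l ! j)) = snd (ts ! i) \<longleftrightarrow> (\<Sum>j<s. A i j) = mult_quotients ts n i"
    if "i < length ts" for A i
  proof -
    have "(\<Sum>j<s. A i j * snd (l ! j)) = (\<Sum>j<s. A i j * n)"
      by (rule sum.cong) (simp_all add: lp)
    also have "\<dots> = n * (\<Sum>j<s. A i j)" by (simp add: sum_distrib_left mult.commute)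
    finally have e: "(\<Sum>j<s. A i j * snd (l ! j)) = n * (\<Sum>j<s. A i j)" .
    from dvd that obtain q where q: "snd (ts ! i) = n * q" by (auto simp: dvd_def)
    show ?thesis unfolding e q mult_quotients_def using n that by simp
  qed
  have col: "\<exists>i<length ts. A i j \<noteq> 0"
    if "(\<Sum>i<length ts. A i j * fst (ts ! i)) = fst (l ! j)" "j < s" for A j
  proof (rule ccontr)
    assume "\<not> (\<exists>i<length ts. A i j \<noteq> 0)"
    then have "fst (l ! j) = 0" using that(1) by simp
    with lp[OF that(2)] show False by simp
  qed
  show ?thesis
  proof (intro set_eqI iffI)
    fix A assume A: "A \<in> list_arrangements ts l"
    have "\<forall>i j. (i \<ge> length ts \<or> j \<ge> s) \<longrightarrow> A i j = 0"
      and "\<forall>i<length ts. (\<Sum>j<s. A i j * snd (l ! j)) = snd (ts ! i)"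
      and C: "\<forall>j<s. (\<Sum>i<length ts. A i j * fst (ts ! i)) = fst (l ! j)"
      using A ls unfolding list_arrangements_def by auto
    then have "A \<in> vec_comps (length ts) s (mult_quotients ts n)"
      unfolding vec_comps_def using row col by blast
    with C show "A \<in> {A \<in> vec_comps (length ts) s (mult_quotients ts n).
        \<forall>j<s. (\<Sum>i<length ts. A i j * fst (ts ! i)) = fst (l ! j)}" by blast
  next
    fix A assume A: "A \<in> {A \<in> vec_comps (length ts) s (mult_quotients ts n).
        \<forall>j<s. (\<Sum>i<length ts. A i j * fst (ts ! i)) = fst (l ! j)}"
    have "\<forall>i j. (i \<ge> length ts \<or> j \<ge> s) \<longrightarrow> A i j = 0"
      and "\<forall>i<length ts. (\<Sum>j<s. A i j) = mult_quotients ts n i"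
      and "\<forall>j<s. (\<Sum>i<length ts. A i j * fst (ts ! i)) = fst (l ! j)"
      using A unfolding vec_comps_def by auto
    then show "A \<in> list_arrangements ts l" unfolding list_arrangements_def using row ls by auto
  qed
qed

lemma list_arrangements_pure_empty:
  assumes n: "0 < n" and "\<not> (\<forall>i<length ts. n dvd snd (ts ! i))" and l: "mset l \<in> pure_types d n s"
  shows "list_arrangements ts l = {}"
proof (rule ccontr)
  assume "list_arrangements ts l \<noteq> {}"
  then obtain A where A: "A \<in> list_arrangements ts l" by blast
  obtain i where i: "i < length ts" "\<not> n dvd snd (ts ! i)" using assms(2) by blast
  have ls: "length l = s" and lp: "\<And>j. j < s \<Longrightarrow> snd (l ! j) = n"
    using l unfolding mset_in_pure_types_iff[OF n] by auto
  have "snd (ts ! i) = (\<Sum>j<s. A i j * snd (l ! j))" using A i ls by (auto simp: list_arrangements_def)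
  also have "\<dots> = (\<Sum>j<s. A i j * n)" by (rule sum.cong) (simp_all add: lp)
  also have "\<dots> = n * (\<Sum>j<s. A i j)" by (simp add: sum_distrib_left mult.commute)
  finally show False using i(2) by simp
qed

lemma vec_comps_eq_UN_list_arrangements:
  assumes ts: "is_type d (mset ts)" and n: "0 < n" and dvd: "\<forall>i<length ts. n dvd snd (ts ! i)"
  shows "vec_comps (length ts) s (mult_quotients ts n)
       = (\<Union>l\<in>{l. mset l \<in> pure_types d n s}. list_arrangements ts l)"
proof
  show "(\<Union>l\<in>{l. mset l \<in> pure_types d n s}. list_arrangements ts l)
      \<subseteq> vec_comps (length ts) s (mult_quotients ts n)"
    using list_arrangements_pure_eq[OF n dvd] by auto
next
  have pos: "\<forall>i<length ts. 0 < fst (ts ! i)" and deg: "(\<Sum>i<length ts. fst (ts ! i) * snd (ts ! i)) = d"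
    using ts by (auto simp: is_type_mset_iff)
  show "vec_comps (length ts) s (mult_quotients ts n)
      \<subseteq> (\<Union>l\<in>{l. mset l \<in> pure_types d n s}. list_arrangements ts l)"
  proof
    fix A assume A: "A \<in> vec_comps (length ts) s (mult_quotients ts n)"
    let ?c = "\<lambda>j. \<Sum>i<length ts. A i j * fst (ts ! i)"
    define l where "l = map (\<lambda>j. (?c j, n)) [0..<s]"
    have cpos: "0 < ?c j" if j: "j < s" for j
    proof -
      obtain i where i: "i < length ts" "A i j \<noteq> 0" using A j by (auto simp: vec_comps_def)
      then have "0 < A i j * fst (ts ! i)" using pos by auto
      also have "\<dots> \<le> ?c j" using i by (intro member_le_sum) auto
      finally show ?thesis .
    qed
    have "(\<Sum>j<s. ?c j * n) = (\<Sum>i<length ts. fst (ts ! i) * (n * (\<Sum>j<s. A i j)))"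
      by (simp add: sum_distrib_left sum_distrib_right sum.swap[of _ "{..<s}"] algebra_simps)
    also have "\<dots> = (\<Sum>i<length ts. fst (ts ! i) * snd (ts ! i))"
      using A dvd by (intro sum.cong) (auto simp: vec_comps_def mult_quotients_def)
    finally have "mset l \<in> pure_types d n s"
      unfolding mset_in_pure_types_iff[OF n] using cpos deg by (simp add: l_def)
    moreover from this have "A \<in> list_arrangements ts l"
      using A by (simp add: list_arrangements_pure_eq[OF n dvd] l_def)
    ultimately show "A \<in> (\<Union>l\<in>{l. mset l \<in> pure_types d n s}. list_arrangements ts l)" by blast
  qed
qed

lemma sum_card_list_arrangements_pure:
  assumes ts: "is_type d (mset ts)" and n: "0 < n"
  shows "(\<Sum>l | mset l \<in> pure_types d n s. card (list_arrangements ts l))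
       = (if \<forall>i<length ts. n dvd snd (ts ! i) then card (vec_comps (length ts) s (mult_quotients ts n)) else 0)"
proof (cases "\<forall>i<length ts. n dvd snd (ts ! i)")
  case True
  have disj: "list_arrangements ts l \<inter> list_arrangements ts l' = {}"
    if "mset l \<in> pure_types d n s" "mset l' \<in> pure_types d n s" "l \<noteq> l'" for l l'
  proof -
    have "l = l'" if "A \<in> list_arrangements ts l" "A \<in> list_arrangements ts l'" for A
      using that \<open>mset l \<in> _\<close> \<open>mset l' \<in> _\<close>
      by (simp add: list_arrangements_pure_eq[OF n True] mset_in_pure_types_iff[OF n] nth_equalityI
          prod_eq_iff)
    then show ?thesis using that(3) by blast
  qed
  have "card (vec_comps (length ts) s (mult_quotients ts n))
      = (\<Sum>l | mset l \<in> pure_types d n s. card (list_arrangements ts l))"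
    unfolding vec_comps_eq_UN_list_arrangements[OF ts n True]
    using disj finite_pure_lists finite_list_arrangements ts
    by (intro card_UN_disjoint) (auto simp: is_type_mset_iff)
  then show ?thesis using True by simp
qed (auto simp: list_arrangements_pure_empty[OF n])

lemma sum_pure_types_arr_count:
  "(\<Sum>\<nu>\<in>pure_types d n s. card (permutations_of_multiset \<nu>) * arr_count \<tau> \<nu>)
     = (\<Sum>l | mset l \<in> pure_types d n s. card (list_arrangements (sorted_list_of_multiset \<tau>) l))"
proof -
  let ?g = "\<lambda>l. card (list_arrangements (sorted_list_of_multiset \<tau>) l)"
  have "(\<Sum>l | mset l \<in> pure_types d n s. ?g l)
      = (\<Sum>\<nu>\<in>pure_types d n s. \<Sum>l\<in>permutations_of_multiset \<nu>. ?g l)"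
    unfolding pure_lists_eq_UN_permutations
    by (rule sum.UNION_disjoint[OF finite_pure_types]) (simp, auto simp: permutations_of_multiset_def)
  also have "\<dots> = (\<Sum>\<nu>\<in>pure_types d n s. card (permutations_of_multiset \<nu>) * arr_count \<tau> \<nu>)"
  proof (intro sum.cong refl)
    fix \<nu>
    have "?g l = arr_count \<tau> \<nu>" if "l \<in> permutations_of_multiset \<nu>" for l
      using that by (simp add: permutations_of_multiset_def arr_count_def
          arrangements_eq_list_arrangements card_list_arrangements_mset_eq)
    then show "(\<Sum>l\<in>permutations_of_multiset \<nu>. ?g l) = card (permutations_of_multiset \<nu>) * arr_count \<tau> \<nu>"
      by simp
  qed
  finally show ?thesis ..
qed

lemma alternating_sum_pure_types:
  assumes \<tau>: "is_type d \<tau>" and d: "0 < d" and n: "0 < n"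
  shows "(\<Sum>s=1..d. (-1)^(s-1) / of_nat s *
            of_nat (\<Sum>\<nu>\<in>pure_types d n s. card (permutations_of_multiset \<nu>) * arr_count \<tau> \<nu>)
          :: 'a::field_char_0)
       = (if \<forall>p\<in>#\<tau>. n dvd snd p then
            if size \<tau> = 1 then 1 / of_nat (mult_quotients (sorted_list_of_multiset \<tau>) n 0) else 0
          else 0)"
proof -
  define ts where "ts = sorted_list_of_multiset \<tau>"
  define k where "k = mult_quotients ts n"
  have ts: "is_type d (mset ts)" using \<tau> by (simp add: ts_def)
  then have pos: "\<forall>i<length ts. 0 < fst (ts ! i) \<and> 0 < snd (ts ! i)"
    and deg: "(\<Sum>i<length ts. fst (ts ! i) * snd (ts ! i)) = d" by (simp_all add: is_type_mset_iff)
  have size: "size \<tau> = length ts" by (simp add: ts_def flip: size_mset)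
  have dvd_iff: "(\<forall>p\<in>#\<tau>. n dvd snd p) \<longleftrightarrow> (\<forall>i<length ts. n dvd snd (ts ! i))"
    using all_set_conv_all_nth[of ts "\<lambda>p. n dvd snd p"] by (simp add: ts_def)
  have "(\<Sum>s=1..d. (-1)^(s-1) / of_nat s *
            of_nat (\<Sum>\<nu>\<in>pure_types d n s. card (permutations_of_multiset \<nu>) * arr_count \<tau> \<nu>) :: 'a)
      = (\<Sum>s=1..d. (-1)^(s-1) / of_nat s * of_nat (if \<forall>i<length ts. n dvd snd (ts ! i)
            then card (vec_comps (length ts) s k) else 0))"
    unfolding sum_pure_types_arr_count ts_def[symmetric] sum_card_list_arrangements_pure[OF ts n] k_def ..
  also have "\<dots> = (if \<forall>i<length ts. n dvd snd (ts ! i) then if length ts = 1 then 1 / of_nat (k 0) else 0 else 0)"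
  proof (cases "\<forall>i<length ts. n dvd snd (ts ! i)")
    case True
    have "0 < length ts" using deg d by (cases ts) auto
    moreover have "vanishes_from (length ts) k" by (simp add: k_def mult_quotients_def vanishes_from_def)
    moreover have "\<forall>i<length ts. 1 \<le> k i"
    proof (intro allI impI)
      fix i assume i: "i < length ts"
      then obtain q where "snd (ts ! i) = n * q" using True by (auto elim!: dvdE)
      moreover have "0 < snd (ts ! i)" using pos i by simp
      ultimately show "1 \<le> k i" using i n by (simp add: k_def mult_quotients_def)
    qed
    moreover have "(\<Sum>i<length ts. k i) \<le> d"
    proof -
      have "k i \<le> fst (ts ! i) * snd (ts ! i)" if "i < length ts" for i
      proof -
        have "k i \<le> snd (ts ! i)" using that by (simp add: k_def mult_quotients_def)
        also have "\<dots> \<le> fst (ts ! i) * snd (ts ! i)" using that pos by (simp add: Suc_le_eq)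
        finally show ?thesis .
      qed
      then show ?thesis unfolding deg[symmetric] by (intro sum_mono) auto
    qed
    ultimately have "(\<Sum>s=1..d. (-1)^(s-1) / of_nat s * of_nat (card (vec_comps (length ts) s k)) :: 'a)
        = (if length ts = 1 then 1 / of_nat (k 0) else 0)"
      by (rule alternating_sum_vec_comps)
    with True show ?thesis by simp
  next
    case False
    show ?thesis by (simp only: if_not_P[OF False]) simp
  qed
  finally show ?thesis by (simp only: dvd_iff size ts_def k_def)
qed

section \<open>The claimed column of the inverse\<close>

definition pure_formula :: "nat \<Rightarrow> nat \<Rightarrow> ptype \<Rightarrow> rat" where
  "pure_formula d n \<nu> = (of_int (mobius_mu n) / of_nat n) *
     ((-1) ^ (size \<nu> - 1) / of_nat (size \<nu>)) *
     (of_nat (fact (size \<nu>)) / of_nat (\<Prod>b \<in> {1..d div n}. fact (count \<nu> (b, n))))"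

definition col_formula :: "nat \<Rightarrow> ptype \<Rightarrow> rat" where
  "col_formula d \<nu> = (\<Sum>n\<in>{1..d}. if is_pure n \<nu> then pure_formula d n \<nu> else 0)"

lemma pure_formula_eq:
  assumes "\<nu> \<in> pure_types d n s" and "0 < n"
  shows "pure_formula d n \<nu>
       = of_int (mobius_mu n) / of_nat n * ((-1)^(s-1) / of_nat s) * of_nat (card (permutations_of_multiset \<nu>))"
proof -
  have "size \<nu> = s" using assms(1) by (simp add: pure_types_def)
  then show ?thesis
    by (simp only: pure_formula_def card_permutations_of_pure_type[OF assms])
qed

lemma pure_types_of_degree_eq_UN:
  assumes "1 \<le> d"
  shows "{\<nu> \<in> types_of_degree d. is_pure n \<nu>} = (\<Union>s\<in>{1..d}. pure_types d n s)"
proof -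
  have "size \<nu> \<in> {1..d}" if "is_type d \<nu>" for \<nu>
  proof -
    have "\<nu> \<noteq> {#}" using that assms by (auto simp: is_type_def)
    then show ?thesis using is_type_size_le[OF that] by (simp add: Suc_le_eq nonempty_has_size)
  qed
  then show ?thesis by (auto simp: pure_types_def types_of_degree_def)
qed

lemma sum_arr_count_col_formula_regroup:
  assumes "1 \<le> d"
  shows "(\<Sum>\<nu>\<in>types_of_degree d. of_nat (arr_count \<tau> \<nu>) * col_formula d \<nu>)
       = (\<Sum>n=1..d. of_int (mobius_mu n) / of_nat n * (\<Sum>s=1..d. (-1)^(s-1) / of_nat s *
            of_nat (\<Sum>\<nu>\<in>pure_types d n s. card (permutations_of_multiset \<nu>) * arr_count \<tau> \<nu>)))"
proof -
  have "(\<Sum>\<nu>\<in>types_of_degree d. of_nat (arr_count \<tau> \<nu>) * col_formula d \<nu>)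
      = (\<Sum>n=1..d. \<Sum>\<nu>\<in>{\<nu> \<in> types_of_degree d. is_pure n \<nu>}. of_nat (arr_count \<tau> \<nu>) * pure_formula d n \<nu>)"
    by (simp add: col_formula_def sum_distrib_left if_distrib sum.inter_filter finite_types_of_degree
        cong: if_cong, rule sum.swap)
  also have "\<dots> = (\<Sum>n=1..d. \<Sum>s=1..d. \<Sum>\<nu>\<in>pure_types d n s. of_nat (arr_count \<tau> \<nu>) * pure_formula d n \<nu>)"
    unfolding pure_types_of_degree_eq_UN[OF assms]
    by (intro sum.cong refl sum.UNION_disjoint)
      (auto simp: pure_types_def intro: finite_pure_types[unfolded pure_types_def])
  also have "\<dots> = (\<Sum>n=1..d. of_int (mobius_mu n) / of_nat n * (\<Sum>s=1..d. (-1)^(s-1) / of_nat s *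
            of_nat (\<Sum>\<nu>\<in>pure_types d n s. card (permutations_of_multiset \<nu>) * arr_count \<tau> \<nu>)))"
  proof (rule sum.cong[OF refl])
    fix n assume "n \<in> {1..d}"
    then have n: "0 < n" by simp
    have "(\<Sum>\<nu>\<in>pure_types d n s. of_nat (arr_count \<tau> \<nu>) * pure_formula d n \<nu>)
        = of_int (mobius_mu n) / of_nat n * ((-1)^(s-1) / of_nat s *
            of_nat (\<Sum>\<nu>\<in>pure_types d n s. card (permutations_of_multiset \<nu>) * arr_count \<tau> \<nu>))" for s
    proof -
      have "(\<Sum>\<nu>\<in>pure_types d n s. of_nat (arr_count \<tau> \<nu>) * pure_formula d n \<nu>)
          = (\<Sum>\<nu>\<in>pure_types d n s. of_int (mobius_mu n) / of_nat n * ((-1)^(s-1) / of_nat s) *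
              of_nat (card (permutations_of_multiset \<nu>) * arr_count \<tau> \<nu>))"
        by (intro sum.cong refl) (simp add: pure_formula_eq[OF _ n])
      then show ?thesis by (simp add: sum_distrib_left mult_ac)
    qed
    then show "(\<Sum>s=1..d. \<Sum>\<nu>\<in>pure_types d n s. of_nat (arr_count \<tau> \<nu>) * pure_formula d n \<nu>)
        = of_int (mobius_mu n) / of_nat n * (\<Sum>s=1..d. (-1)^(s-1) / of_nat s *
            of_nat (\<Sum>\<nu>\<in>pure_types d n s. card (permutations_of_multiset \<nu>) * arr_count \<tau> \<nu>))"
      by (simp add: sum_distrib_left)
  qed
  finally show ?thesis .
qed

lemma sum_arr_count_col_formula:
  assumes d: "1 \<le> d" and \<tau>: "is_type d \<tau>"
  shows "(\<Sum>\<nu>\<in>types_of_degree d. of_nat (arr_count \<tau> \<nu>) * col_formula d \<nu>)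
       = (if \<tau> = {#(d, 1)#} then 1 else 0)"
proof -
  let ?q = "\<lambda>n. mult_quotients (sorted_list_of_multiset \<tau>) n 0"
  have "(\<Sum>\<nu>\<in>types_of_degree d. of_nat (arr_count \<tau> \<nu>) * col_formula d \<nu>)
      = (\<Sum>n=1..d. of_int (mobius_mu n) / of_nat n * (if \<forall>p\<in>#\<tau>. n dvd snd p then
            if size \<tau> = 1 then 1 / of_nat (?q n) else 0 else 0))"
    unfolding sum_arr_count_col_formula_regroup[OF d]
  proof (intro sum.cong refl)
    fix n assume "n \<in> {1..d}"
    with d show "of_int (mobius_mu n) / of_nat n * (\<Sum>s=1..d. (-1)^(s-1) / of_nat s *
            of_nat (\<Sum>\<nu>\<in>pure_types d n s. card (permutations_of_multiset \<nu>) * arr_count \<tau> \<nu>))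
        = of_int (mobius_mu n) / of_nat n * (if \<forall>p\<in>#\<tau>. n dvd snd p then
            if size \<tau> = 1 then 1 / of_nat (?q n) else 0 else (0::rat))"
      by (subst alternating_sum_pure_types[OF \<tau>]) auto
  qed
  also have "\<dots> = (if \<tau> = {#(d, 1)#} then 1 else 0)"
  proof (cases "size \<tau> = 1")
    case True
    then obtain b m where bm: "\<tau> = {#(b, m)#}" by (metis size_1_singleton_mset surj_pair)
    then have "b * m = d" "0 < b" "0 < m" using \<tau> by (auto simp: is_type_def)
    then have m: "0 < m" "m \<le> d" by auto
    have "(\<Sum>n=1..d. of_int (mobius_mu n) / of_nat n * (if \<forall>p\<in>#\<tau>. n dvd snd p then
            if size \<tau> = 1 then 1 / of_nat (?q n) else 0 else 0))
        = (\<Sum>n | n dvd m. of_int (mobius_mu n) / of_nat m :: rat)"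
    proof (rule sum.mono_neutral_cong_right)
      have "0 < n \<and> n \<le> d" if "n dvd m" for n
        using m that dvd_imp_le[OF that m(1)] by (auto intro: Nat.gr0I)
      then show "{n. n dvd m} \<subseteq> {1..d}" by (auto simp: Suc_le_eq)
    qed (auto simp: bm mult_quotients_def elim!: dvdE)
    also have "\<dots> = of_int (\<Sum>n | n dvd m. mobius_mu n) / of_nat m"
      by (simp add: sum_divide_distrib)
    also have "\<dots> = (if \<tau> = {#(d, 1)#} then 1 else 0)"
      using \<open>b * m = d\<close> by (auto simp: sum_mobius_mu_divisors[OF m(1)] bm)
    finally show ?thesis .
  next
    case False
    then have "\<tau> \<noteq> {#(d, 1)#}" by auto
    with False show ?thesis by (simp cong: if_cong)
  qed
  finally show ?thesis .
qed

section \<open>Triangular linear systems\<close>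

definition triangular_wrt :: "('a \<Rightarrow> 'b::linorder) \<Rightarrow> 'a set \<Rightarrow> ('a \<Rightarrow> 'a \<Rightarrow> 'f::zero) \<Rightarrow> bool" where
  "triangular_wrt key T a \<longleftrightarrow>
     (\<forall>\<tau>\<in>T. a \<tau> \<tau> \<noteq> 0 \<and> (\<forall>\<nu>\<in>T. a \<tau> \<nu> \<noteq> 0 \<longrightarrow> \<nu> \<noteq> \<tau> \<longrightarrow> key \<nu> < key \<tau>))"

lemma triangular_wrt_subset: "triangular_wrt key T a \<Longrightarrow> S \<subseteq> T \<Longrightarrow> triangular_wrt key S a"
  by (auto simp: triangular_wrt_def)

lemma triangular_wrt_of_nat:
  "triangular_wrt key T a \<Longrightarrow> triangular_wrt key T (\<lambda>\<tau> \<nu>. of_nat (a \<tau> \<nu>) :: 'f::semiring_char_0)"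
  by (simp add: triangular_wrt_def)

text \<open>Both proofs add the element of largest key last: its column vanishes in all earlier rows.\<close>
lemma triangular_system_unique:
  fixes a :: "'a \<Rightarrow> 'a \<Rightarrow> 'f::field"
  assumes "finite T" and "triangular_wrt key T a" and "\<forall>\<tau>\<in>T. (\<Sum>\<nu>\<in>T. a \<tau> \<nu> * x \<nu>) = 0"
  shows "\<forall>\<tau>\<in>T. x \<tau> = 0"
  using assms
proof (induction T rule: finite_ranking_induct[where f = key])
  case (insert \<sigma> S)
  show ?case
  proof (cases "\<sigma> \<in> S")
    case False
    have tri: "triangular_wrt key S a" using insert.prems(1) by (rule triangular_wrt_subset) auto
    have "a \<tau> \<sigma> = 0" if "\<tau> \<in> S" for \<tau>
      using insert.prems(1) insert.hyps(2)[OF that] that False by (force simp: triangular_wrt_def)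
    then have "\<forall>\<tau>\<in>S. (\<Sum>\<nu>\<in>S. a \<tau> \<nu> * x \<nu>) = 0"
      using insert.prems(2) insert.hyps(1) False by (simp add: sum.insert)
    with tri have "\<forall>\<tau>\<in>S. x \<tau> = 0" by (rule insert.IH)
    moreover have "a \<sigma> \<sigma> * x \<sigma> + (\<Sum>\<nu>\<in>S. a \<sigma> \<nu> * x \<nu>) = 0"
      using insert.prems(2) insert.hyps(1) False by (simp add: sum.insert)
    ultimately show ?thesis using insert.prems(1) by (simp add: triangular_wrt_def)
  qed (use insert in \<open>simp add: insert_absorb\<close>)
qed simp

lemma triangular_system_solvable:
  fixes a :: "'a \<Rightarrow> 'a \<Rightarrow> 'f::field"
  assumes "finite T" and "triangular_wrt key T a"
  shows "\<exists>x. \<forall>\<tau>\<in>T. (\<Sum>\<nu>\<in>T. a \<tau> \<nu> * x \<nu>) = b \<tau>"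
  using assms
proof (induction T rule: finite_ranking_induct[where f = key])
  case (insert \<sigma> S)
  show ?case
  proof (cases "\<sigma> \<in> S")
    case False
    have zero: "a \<tau> \<sigma> = 0" if "\<tau> \<in> S" for \<tau>
      using insert.prems insert.hyps(2)[OF that] that False by (force simp: triangular_wrt_def)
    obtain x where x: "\<forall>\<tau>\<in>S. (\<Sum>\<nu>\<in>S. a \<tau> \<nu> * x \<nu>) = b \<tau>"
      using insert.IH insert.prems triangular_wrt_subset by blast
    define x' where "x' = x(\<sigma> := (b \<sigma> - (\<Sum>\<nu>\<in>S. a \<sigma> \<nu> * x \<nu>)) / a \<sigma> \<sigma>)"
    have "(\<Sum>\<nu>\<in>S. a \<tau> \<nu> * x' \<nu>) = (\<Sum>\<nu>\<in>S. a \<tau> \<nu> * x \<nu>)" for \<tau>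
      using False by (intro sum.cong) (auto simp: x'_def)
    moreover have "a \<sigma> \<sigma> \<noteq> 0" using insert.prems by (simp add: triangular_wrt_def)
    ultimately have "\<forall>\<tau>\<in>insert \<sigma> S. (\<Sum>\<nu>\<in>insert \<sigma> S. a \<tau> \<nu> * x' \<nu>) = b \<tau>"
      using x zero insert.hyps(1) False by (simp add: sum.insert x'_def)
    then show ?thesis by blast
  qed (use insert in \<open>simp add: insert_absorb\<close>)
qed simp

lemma triangular_system_solutions_eq:
  fixes a :: "'a \<Rightarrow> 'a \<Rightarrow> 'f::field"
  assumes "finite T" and "triangular_wrt key T a"
    and "\<forall>\<tau>\<in>T. (\<Sum>\<nu>\<in>T. a \<tau> \<nu> * x \<nu>) = b \<tau>" and "\<forall>\<tau>\<in>T. (\<Sum>\<nu>\<in>T. a \<tau> \<nu> * y \<nu>) = b \<tau>"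
  shows "\<forall>\<tau>\<in>T. x \<tau> = y \<tau>"
proof -
  have "\<forall>\<tau>\<in>T. (\<Sum>\<nu>\<in>T. a \<tau> \<nu> * (x \<nu> - y \<nu>)) = 0"
    using assms(3,4) by (simp add: right_diff_distrib sum_subtractf)
  with assms(1,2) have "\<forall>\<tau>\<in>T. x \<tau> - y \<tau> = 0" by (rule triangular_system_unique)
  then show ?thesis by simp
qed

lemma arr_inv_inverse:
  assumes tri: "triangular_wrt key (types_of_degree d) arr_count"
    and "\<tau> \<in> types_of_degree d" "\<sigma> \<in> types_of_degree d"
  shows "(\<Sum>\<nu>\<in>types_of_degree d. of_nat (arr_count \<tau> \<nu>) * arr_inv d \<nu> \<sigma>) = (if \<tau> = \<sigma> then 1 else 0)"
proof -
  let ?T = "types_of_degree d"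
  let ?P = "\<lambda>g. (\<forall>\<tau> \<in> ?T. \<forall>\<sigma> \<in> ?T.
         (\<Sum>\<nu> \<in> ?T. of_nat (arr_count \<tau> \<nu>) * g \<nu> \<sigma>) = (if \<tau> = \<sigma> then 1 else 0)) \<and>
      (\<forall>\<tau> \<sigma>. (\<tau> \<notin> ?T \<or> \<sigma> \<notin> ?T) \<longrightarrow> g \<tau> \<sigma> = (0::rat))"
  note tri' = triangular_wrt_of_nat[OF tri, where 'f = rat]
  have "\<forall>\<sigma>. \<exists>x. \<forall>\<tau>\<in>?T. (\<Sum>\<nu>\<in>?T. of_nat (arr_count \<tau> \<nu>) * x \<nu>) = (if \<tau> = \<sigma> then 1 else (0::rat))"
    by (intro allI triangular_system_solvable[OF finite_types_of_degree tri'])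
  then obtain X where X: "\<And>\<sigma>. \<forall>\<tau>\<in>?T. (\<Sum>\<nu>\<in>?T. of_nat (arr_count \<tau> \<nu>) * X \<sigma> \<nu>) = (if \<tau> = \<sigma> then 1 else (0::rat))"
    by metis
  define g where "g \<tau> \<sigma> = (if \<tau> \<in> ?T \<and> \<sigma> \<in> ?T then X \<sigma> \<tau> else 0)" for \<tau> \<sigma>
  have "?P g"
  proof (intro conjI ballI allI impI)
    fix \<tau> \<sigma> assume "\<tau> \<in> ?T" "\<sigma> \<in> ?T"
    then show "(\<Sum>\<nu>\<in>?T. of_nat (arr_count \<tau> \<nu>) * g \<nu> \<sigma>) = (if \<tau> = \<sigma> then 1 else 0)"
      using X[of \<sigma>] by (simp add: g_def cong: sum.cong)
  qed (auto simp: g_def)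
  moreover have "g' = g" if "?P g'" for g'
  proof (intro ext)
    fix \<tau> \<sigma>
    show "g' \<tau> \<sigma> = g \<tau> \<sigma>"
    proof (cases "\<tau> \<in> ?T \<and> \<sigma> \<in> ?T")
      case True
      then show ?thesis
        using triangular_system_solutions_eq[OF finite_types_of_degree tri', where x = "\<lambda>\<nu>. g' \<nu> \<sigma>"
            and y = "\<lambda>\<nu>. g \<nu> \<sigma>" and b = "\<lambda>\<tau>. if \<tau> = \<sigma> then 1 else 0"] that \<open>?P g\<close>
        by blast
    qed (use that in \<open>auto simp: g_def\<close>)
  qed
  ultimately have "?P (arr_inv d)" unfolding arr_inv_def by (rule theI)
  then show ?thesis using assms(2,3) by blast
qed

lemma arr_inv_eqI:
  assumes tri: "triangular_wrt key (types_of_degree d) arr_count"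
    and \<sigma>: "\<sigma> \<in> types_of_degree d"
    and y: "\<forall>\<tau>\<in>types_of_degree d.
      (\<Sum>\<nu>\<in>types_of_degree d. of_nat (arr_count \<tau> \<nu>) * y \<nu>) = (if \<tau> = \<sigma> then 1 else 0)"
    and \<tau>: "\<tau> \<in> types_of_degree d"
  shows "arr_inv d \<tau> \<sigma> = y \<tau>"
proof -
  have "\<forall>\<tau>\<in>types_of_degree d.
      (\<Sum>\<nu>\<in>types_of_degree d. of_nat (arr_count \<tau> \<nu>) * arr_inv d \<nu> \<sigma>) = (if \<tau> = \<sigma> then 1 else 0)"
    using arr_inv_inverse[OF tri _ \<sigma>] by blast
  with finite_types_of_degree triangular_wrt_of_nat[OF tri]
  have "\<forall>\<tau>\<in>types_of_degree d. arr_inv d \<tau> \<sigma> = y \<tau>"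
    using y by (rule triangular_system_solutions_eq)
  then show ?thesis using \<tau> by blast
qed

section \<open>Triangularity of the arrangement matrix\<close>

lemma arr_count_diag_nonzero:
  assumes "is_type d \<tau>"
  shows "arr_count \<tau> \<tau> \<noteq> 0"
proof -
  let ?ts = "sorted_list_of_multiset \<tau>"
  let ?r = "length ?ts"
  let ?I = "\<lambda>i j. if i = j \<and> i < ?r then 1 else (0::nat)"
  have "?I \<in> list_arrangements ?ts ?ts"
    by (auto simp: list_arrangements_def if_distrib[of "\<lambda>x. x * _"] cong: if_cong)
  moreover have "finite (list_arrangements ?ts ?ts)"
    using assms is_type_mset_iff[of d ?ts] by (intro finite_list_arrangements) simp
  ultimately show ?thesis by (auto simp: arr_count_def arrangements_eq_list_arrangements)
qed

lemma mset_eq_image_mset_nth: "mset xs = image_mset (\<lambda>i. xs ! i) (mset_set {..<length xs})"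
proof -
  have "mset xs = mset (map (\<lambda>i. xs ! i) [0..<length xs])" by (simp add: map_nth)
  then show ?thesis by (simp add: mset_upt atLeast0LessThan)
qed

lemma list_arrangement_unit_sums_mset_eq:
  assumes A: "A \<in> list_arrangements ts ls" and len: "length ts = length ls"
    and rows: "\<forall>i<length ts. (\<Sum>j<length ls. A i j) = 1"
    and cols: "\<forall>j<length ls. (\<Sum>i<length ts. A i j) = 1"
  shows "mset ts = mset ls"
proof -
  define r where "r = length ts"
  have "\<forall>i<r. \<exists>j<r. A i j = 1 \<and> (\<forall>j'<r. j \<noteq> j' \<longrightarrow> A i j' = 0)"
    using rows len by (simp add: r_def sum_eq_Suc0_iff) (metis lessThan_iff)
  then obtain \<pi> where \<pi>: "\<And>i. i < r \<Longrightarrow> \<pi> i < r \<and> A i (\<pi> i) = 1 \<and> (\<forall>j<r. j \<noteq> \<pi> i \<longrightarrow> A i j = 0)"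
    by metis
  have col: "A i' (\<pi> i) = (if i' = i then 1 else 0)" if "i < r" "i' < r" for i i'
  proof -
    obtain i0 where "i0 < r" "A i0 (\<pi> i) = 1" "\<forall>i'<r. i0 \<noteq> i' \<longrightarrow> A i' (\<pi> i) = 0"
      using cols \<pi>[OF \<open>i < r\<close>] len by (auto simp: r_def sum_eq_Suc0_iff)
    then show ?thesis using \<pi>[OF \<open>i < r\<close>] that by (metis zero_neq_one)
  qed
  have eq: "ts ! i = ls ! \<pi> i" if i: "i < r" for i
  proof -
    have "snd (ts ! i) = (\<Sum>j<r. A i j * snd (ls ! j))"
      using A i len by (simp add: list_arrangements_def r_def)
    also have "\<dots> = (\<Sum>j<r. if j = \<pi> i then snd (ls ! j) else 0)"
      using \<pi>[OF i] by (intro sum.cong) auto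
    finally have "snd (ts ! i) = snd (ls ! \<pi> i)" using \<pi>[OF i] by simp
    moreover have "fst (ls ! \<pi> i) = (\<Sum>i'<r. A i' (\<pi> i) * fst (ts ! i'))"
      using A \<pi>[OF i] len by (simp add: list_arrangements_def r_def)
    moreover have "\<dots> = (\<Sum>i'<r. if i' = i then fst (ts ! i') else 0)"
      using col[OF i] by (intro sum.cong) auto
    ultimately show ?thesis using i by (simp add: prod_eq_iff)
  qed
  have "inj_on \<pi> {..<r}"
    using col by (intro inj_onI) (metis lessThan_iff zero_neq_one)
  moreover have "\<pi> ` {..<r} \<subseteq> {..<r}" using \<pi> by auto
  ultimately have img: "\<pi> ` {..<r} = {..<r}" by (simp add: card_image card_subset_eq)
  have "mset ts = image_mset (\<lambda>i. ts ! i) (mset_set {..<r})"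
    by (simp add: mset_eq_image_mset_nth r_def)
  also have "\<dots> = image_mset (\<lambda>i. ls ! \<pi> i) (mset_set {..<r})"
    using eq by (intro image_mset_cong) simp
  also have "\<dots> = image_mset (\<lambda>j. ls ! j) (image_mset \<pi> (mset_set {..<r}))"
    by (simp add: multiset.map_comp o_def)
  also have "\<dots> = mset ls"
    using \<open>inj_on \<pi> {..<r}\<close> img len by (simp add: image_mset_mset_set mset_eq_image_mset_nth r_def)
  finally show ?thesis .
qed

lemma sum_mult_le_sum_imp_eq_1:
  fixes f g :: "'a \<Rightarrow> nat"
  assumes "finite S" and "\<forall>j\<in>S. 0 < f j" and "\<forall>j\<in>S. 0 < g j"
    and "(\<Sum>j\<in>S. g j * f j) \<le> (\<Sum>j\<in>S. g j)"
  shows "\<forall>j\<in>S. f j = 1"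
proof (rule ccontr)
  assume "\<not> (\<forall>j\<in>S. f j = 1)"
  then obtain j where "j \<in> S" "1 < f j" using assms(2) by (metis less_one nat_neq_iff)
  then have "(\<Sum>j\<in>S. g j) < (\<Sum>j\<in>S. g j * f j)"
    using assms(1-3) by (intro sum_strict_mono_ex1) (auto intro!: bexI[of _ j])
  then show False using assms(4) by simp
qed

lemma list_arrangement_col_sum_pos:
  assumes "A \<in> list_arrangements ts ls" and "j < length ls" and "0 < fst (ls ! j)"
  shows "0 < (\<Sum>i<length ts. A i j)"
proof (rule ccontr)
  assume "\<not> 0 < (\<Sum>i<length ts. A i j)"
  then have "\<forall>i<length ts. A i j = 0" by simp
  have "fst (ls ! j) = (\<Sum>i<length ts. A i j * fst (ts ! i))"
    using assms(1,2) by (simp add: list_arrangements_def)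
  also have "\<dots> = 0" using \<open>\<forall>i<length ts. A i j = 0\<close> by simp
  finally show False using assms(3) by simp
qed

lemma list_arrangement_row_sum_pos:
  assumes "A \<in> list_arrangements ts ls" and "i < length ts" and "0 < snd (ts ! i)"
  shows "0 < (\<Sum>j<length ls. A i j)"
proof (rule ccontr)
  assume "\<not> 0 < (\<Sum>j<length ls. A i j)"
  then have "\<forall>j<length ls. A i j = 0" by simp
  have "snd (ts ! i) = (\<Sum>j<length ls. A i j * snd (ls ! j))"
    using assms(1,2) by (simp add: list_arrangements_def)
  also have "\<dots> = 0" using \<open>\<forall>j<length ls. A i j = 0\<close> by simp
  finally show False using assms(3) by simp
qed

definition type_key :: "ptype \<Rightarrow> nat \<times> int" where
  "type_key \<tau> = ((\<Sum>p\<in>#\<tau>. snd p), - int (size \<tau>))"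

text \<open>Every column of an arrangement of \<open>\<tau>\<close> into \<open>\<nu>\<close> is nonzero, so the total multiplicity can
  only grow from \<open>\<nu>\<close> to \<open>\<tau>\<close>. If it does not, every column sum is \<open>1\<close>, so \<open>\<tau>\<close> has at most as
  many parts as \<open>\<nu>\<close>, and equally many only for a permutation matrix.\<close>
lemma arr_count_nonzero_type_key_less:
  assumes \<tau>: "is_type d \<tau>" and \<nu>: "is_type d \<nu>" and "arr_count \<tau> \<nu> \<noteq> 0" and "\<nu> \<noteq> \<tau>"
  shows "type_key \<nu> < type_key \<tau>"
proof -
  define ts where "ts = sorted_list_of_multiset \<tau>"
  define ls where "ls = sorted_list_of_multiset \<nu>"
  define r where "r = length ts"
  define s where "s = length ls"
  have pt: "\<forall>i<r. 0 < fst (ts ! i) \<and> 0 < snd (ts ! i)"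
    using \<tau> is_type_mset_iff[of d ts] by (simp add: ts_def r_def)
  have pl: "\<forall>j<s. 0 < fst (ls ! j) \<and> 0 < snd (ls ! j)"
    using \<nu> is_type_mset_iff[of d ls] by (simp add: ls_def s_def)
  obtain A where A: "A \<in> list_arrangements ts ls"
    using assms(3) by (fastforce simp: arr_count_def arrangements_eq_list_arrangements ts_def ls_def)
  let ?col = "\<lambda>j. \<Sum>i<r. A i j" and ?row = "\<lambda>i. \<Sum>j<s. A i j"
  have col_pos: "\<forall>j<s. 0 < ?col j" and row_pos: "\<forall>i<r. 0 < ?row i"
    using list_arrangement_col_sum_pos[OF A] list_arrangement_row_sum_pos[OF A] pt pl
    by (simp_all add: r_def s_def)
  have mult_\<tau>: "(\<Sum>p\<in>#\<tau>. snd p) = (\<Sum>j<s. snd (ls ! j) * ?col j)"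
  proof -
    have "(\<Sum>p\<in>#\<tau>. snd p) = (\<Sum>i<r. \<Sum>j<s. A i j * snd (ls ! j))"
      using A sum_mset_mset_eq_sum_nth[of snd ts] by (simp add: ts_def r_def s_def list_arrangements_def)
    also have "\<dots> = (\<Sum>j<s. snd (ls ! j) * ?col j)"
      by (subst sum.swap) (simp add: sum_distrib_left mult.commute)
    finally show ?thesis .
  qed
  have mult_\<nu>: "(\<Sum>p\<in>#\<nu>. snd p) = (\<Sum>j<s. snd (ls ! j))"
    using sum_mset_mset_eq_sum_nth[of snd ls] by (simp add: ls_def s_def)
  have "(\<Sum>j<s. snd (ls ! j)) \<le> (\<Sum>j<s. snd (ls ! j) * ?col j)"
    using col_pos by (intro sum_mono) (simp add: Suc_le_eq)
  moreover have size: "size \<tau> = r" "size \<nu> = s"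
    by (simp_all add: r_def ts_def s_def ls_def flip: size_mset)
  ultimately consider "(\<Sum>p\<in>#\<nu>. snd p) < (\<Sum>p\<in>#\<tau>. snd p)"
    | "(\<Sum>j<s. snd (ls ! j) * ?col j) \<le> (\<Sum>j<s. snd (ls ! j))"
    using mult_\<tau> mult_\<nu> by linarith
  then show ?thesis
  proof cases
    case 1
    then show ?thesis by (simp add: type_key_def less_prod_def)
  next
    case 2
    then have cols: "\<forall>j<s. ?col j = 1"
      using sum_mult_le_sum_imp_eq_1[of "{..<s}" ?col "\<lambda>j. snd (ls ! j)"] col_pos pl by simp
    have "(\<Sum>i<r. 1) \<le> (\<Sum>i<r. ?row i)" using row_pos by (intro sum_mono) (simp add: Suc_le_eq)
    also have "\<dots> = (\<Sum>j<s. ?col j)" by (rule sum.swap)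
    also have "\<dots> = s" using cols by simp
    finally have "r \<le> s" by simp
    moreover have "r \<noteq> s"
    proof
      assume "r = s"
      then have "\<forall>i<r. ?row i = 1"
        using sum_mult_le_sum_imp_eq_1[of "{..<r}" ?row "\<lambda>_. 1"] row_pos
          sum.swap[of "\<lambda>i j. A i j" "{..<r}" "{..<s}"] cols by simp
      then have "mset ts = mset ls"
        using list_arrangement_unit_sums_mset_eq[OF A] cols \<open>r = s\<close> by (simp add: r_def s_def)
      then show False using assms(4) by (simp add: ts_def ls_def)
    qed
    ultimately show ?thesis using 2 mult_\<tau> mult_\<nu> cols by (simp add: type_key_def less_prod_def size)
  qed
qed

lemma arr_count_triangular: "triangular_wrt type_key (types_of_degree d) arr_count"
  by (auto simp: triangular_wrt_def types_of_degree_def arr_count_diag_nonzero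
      arr_count_nonzero_type_key_less)

lemma col_formula_mixed: "is_mixed \<nu> \<Longrightarrow> col_formula d \<nu> = 0"
  by (simp add: col_formula_def is_mixed_def)

lemma col_formula_pure:
  assumes "is_type d \<nu>" and "\<nu> \<noteq> {#}" and "is_pure m \<nu>"
  shows "col_formula d \<nu> = pure_formula d m \<nu>"
proof -
  obtain p where p: "p \<in># \<nu>" using assms(2) by blast
  have pure_iff: "is_pure n \<nu> \<longleftrightarrow> n = m" for n
  proof
    assume "is_pure n \<nu>"
    then have "snd p = n" "snd p = m" using p assms(3) unfolding is_pure_def by blast+
    then show "n = m" by simp
  qed (use assms(3) in simp)
  have "snd p = m" "0 < fst p" "0 < m" using p assms(1,3) by (auto simp: is_pure_def is_type_def)
  moreover have "fst p * snd p \<le> d" by (rule is_type_elem_le[OF assms(1) p])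
  moreover have "snd p \<le> fst p * snd p" using \<open>0 < fst p\<close> by simp
  ultimately have "m \<in> {1..d}" unfolding atLeastAtMost_iff by linarith
  then show ?thesis by (simp add: col_formula_def pure_iff)
qed

theorem theorem4:
  fixes d :: nat and \<tau> :: ptype
  assumes "d \<ge> 1" and "is_type d \<tau>"
  shows "(is_mixed \<tau> \<longrightarrow> arr_inv d \<tau> {#(d, 1)#} = 0) \<and>
         (\<forall>m. is_pure m \<tau> \<longrightarrow>
            arr_inv d \<tau> {#(d, 1)#} =
              (of_int (mobius_mu m) / of_nat m) *
              ((-1) ^ (size \<tau> - 1) / of_nat (size \<tau>)) *
              (of_nat (fact (size \<tau>)) /
               of_nat (\<Prod>b \<in> {1..d div m}. fact (count \<tau> (b, m)))))"
proof -
  have "{#(d, 1)#} \<in> types_of_degree d" using assms(1) by (simp add: types_of_degree_def is_type_def)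
  moreover have "\<tau> \<in> types_of_degree d" using assms(2) by (simp add: types_of_degree_def)
  ultimately have inv: "arr_inv d \<tau> {#(d, 1)#} = col_formula d \<tau>"
    using sum_arr_count_col_formula[OF assms(1)]
    by (intro arr_inv_eqI[OF arr_count_triangular]) (auto simp: types_of_degree_def)
  have "\<tau> \<noteq> {#}" using assms by (auto simp: is_type_def)
  then show ?thesis
    unfolding inv using assms(2) by (simp add: col_formula_mixed col_formula_pure pure_formula_def)
qed

end
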